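(* Let $r,s\in[0,1]$ with $s\neq 0$, and suppose $h:\Omega\to\Omega$ is a homeomorphism with $\mu_s=\mu_r\circ h^{-1}$. Fix $i\in\mathbb{N}$. Then the set of values \[\frac{\mu_r(C)}{\mu_r(h^{-1}(A_i))},\qquad C \text{ a clopen subset of } h^{-1}(A_i),\] is precisely the set of values $\frac{P(s)}{s}$ where $P$ ranges over partition polynomials dominated by the polynomial $X$; equivalently, it is precisely the set of values $P_1(s)$ where $P_1$ ranges over all partition polynomials. (Moreover, if $Q$ is a partition polynomial with $\mu_r(h^{-1}(A_i))=Q(r)$, the values $\mu_r(C)$ for clopen $C\subseteq h^{-1}(A_i)$ are values $R(r)$ with $R$ a partition polynomial dominated by $Q$.)
   Context: $\Omega=\{0,1\}^{\mathbb{N}}$ with the product topology. For $r\in[0,1]$, $\mu_r$ is the infinite product of the measure $\lambda_r$ on $\{0,1\}$ with $\lambda_r\{1\}=r$, $\lambda_r\{0\}=1-r$. For $i\in\mathbb{N}$, $A_i=\{x\in\Omega: x_i=1\}$. A polynomial with integer coefficients is a partition polynomial if it can be written as $\sum_{i=0}^n a_iX^i(1-X)^{n-i}$ for some $n\ge0$ and integers $0\le a_i\le\binom{n}{i}$. Given partition polynomials $P,Q$, $P$ dominates $Q$ if for some sufficiently large $n$ one can write $P(X)=\sum_{i=0}^n a_iX^i(1-X)^{n-i}$ and $Q(X)=\sum_{i=0}^n b_iX^i(1-X)^{n-i}$ with $0\le b_i\le a_i\le\binom{n}{i}$ for each $i\le n$. *)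

theory Defs
  imports "HOL-Probability.Probability" "HOL-Computational_Algebra.Polynomial"
begin

text \<open>Cantor space \<Omega> = {0,1}^\<nat> is modelled as the type nat \<Rightarrow> bool
  (True = 1), carrying the product topology of the discrete topology on bool
  (the library instance for function types).\<close>

type_synonym cantor = "nat \<Rightarrow> bool"

definition mu :: "real \<Rightarrow> cantor measure" where
  "mu r = PiM UNIV (\<lambda>_. measure_pmf (bernoulli_pmf r))"

definition cyl :: "nat \<Rightarrow> cantor set" where
  "cyl i = {x. x i}"

definition clopen_set :: "cantor set \<Rightarrow> bool" where
  "clopen_set C \<longleftrightarrow> open C \<and> closed C"

definition bpoly :: "nat \<Rightarrow> nat \<Rightarrow> int poly" where
  "bpoly n i = [:0, 1:] ^ i * [:1, -1:] ^ (n - i)"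

definition partition_poly :: "int poly \<Rightarrow> bool" where
  "partition_poly P \<longleftrightarrow> (\<exists>n a. (\<forall>i\<le>n. 0 \<le> a i \<and> a i \<le> int (n choose i))
       \<and> P = (\<Sum>i\<le>n. smult (a i) (bpoly n i)))"

definition dominates :: "int poly \<Rightarrow> int poly \<Rightarrow> bool" where
  "dominates P Q \<longleftrightarrow> (\<exists>n a b. (\<forall>i\<le>n. 0 \<le> b i \<and> b i \<le> a i \<and> a i \<le> int (n choose i))
       \<and> P = (\<Sum>i\<le>n. smult (a i) (bpoly n i))
       \<and> Q = (\<Sum>i\<le>n. smult (b i) (bpoly n i)))"

definition evalp :: "int poly \<Rightarrow> real \<Rightarrow> real" where
  "evalp P x = poly (map_poly real_of_int P) x"

end

theory Submission
  imports Defs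
begin

text \<open>A clopen subset of Cantor space depends on finitely many coordinates J, so it consists
  of the points whose trace {j \<in> J. x j} lies in a family W of subsets of J. Its mu_t-measure
  is the sum over F \<in> W of t^|F| (1-t)^(|J|-|F|), i.e. P(t) for the partition polynomial whose
  k-th coefficient counts the k-element members of W; conversely, choosing the right number of
  k-subsets realises every partition polynomial. Demanding that every member of W contain i
  gives exactly the clopen subsets of A_i, with measures t P(t).

  Since h is a homeomorphism pushing mu_r to mu_s, the clopen subsets of h^-1(A_i) are the
  preimages of clopen subsets D of A_i, with mu_r(h^-1 D) = mu_s(D); in particular
  mu_r(h^-1 A_i) = s, and dividing by s gives the set of all P(s). The partition polynomials
  dominated by X are exactly the products X P. For the last claim, mu_r(C) = s P1(s), where P1(s) is the
  mu_s-measure of a clopen set, hence the mu_r-measure of its preimage, i.e. P2(r); thus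
  mu_r(C) = Q(r) P2(r), and Q dominates Q P2 because Q = Q * 1 with 1 expanded in the
  Bernstein basis of the degree of P2.\<close>

text \<open>With bool second countable, the product sigma-algebra underlying mu t is the Borel
  sigma-algebra of Cantor space (sets_PiM_equal_borel), so open sets and continuous maps are
  measurable.\<close>

instance bool :: second_countable_topology
proof
  show "\<exists>B :: bool set set. countable B \<and> open = generate_topology B"
    by (intro exI[of _ UNIV])
      (auto simp: fun_eq_iff discrete_topology_class.open_discrete intro: generate_topology.Basis)
qed

lemma divide_setcompr_eq:
  fixes c :: "'a :: field"
  assumes "{f x | x. A x} = {c * g y | y. B y}" "c \<noteq> 0"
  shows "{f x / c | x. A x} = {g y | y. B y}"
proof -
  have "{f x / c | x. A x} = (\<lambda>v. v / c) ` {f x | x. A x}"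
    by (simp only: setcompr_eq_image image_image)
  also have "\<dots> = {g y | y. B y}"
    using assms by (simp add: setcompr_eq_image image_image)
  finally show ?thesis .
qed

section \<open>Clopen sets of Cantor space\<close>

definition determined_by :: "nat set \<Rightarrow> cantor set \<Rightarrow> bool" where
  "determined_by J C \<longleftrightarrow> (\<forall>x y. (\<forall>j\<in>J. x j = y j) \<longrightarrow> (x \<in> C \<longleftrightarrow> y \<in> C))"

definition coord_set :: "nat set \<Rightarrow> nat set set \<Rightarrow> cantor set" where
  "coord_set J W = {x. {j\<in>J. x j} \<in> W}"

lemma determined_by_mono: "determined_by J C \<Longrightarrow> J \<subseteq> K \<Longrightarrow> determined_by K C"
  unfolding determined_by_def by blast

lemma determined_by_UN:
  "(\<And>x. x \<in> X \<Longrightarrow> determined_by J (A x)) \<Longrightarrow> determined_by J (\<Union>x\<in>X. A x)"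
  unfolding determined_by_def by blast

lemma determined_by_PiE: "determined_by {i. U i \<noteq> UNIV} (Pi\<^sub>E UNIV U)"
proof -
  have "x i \<in> U i \<longleftrightarrow> y i \<in> U i" if "\<forall>j\<in>{i. U i \<noteq> UNIV}. x j = y j" for x y :: cantor and i
    using that by (cases "U i = UNIV") auto
  then show ?thesis unfolding determined_by_def PiE_UNIV_domain Pi_iff by blast
qed

lemma determined_by_coord_set: "determined_by J (coord_set J W)"
  unfolding determined_by_def
proof (intro allI impI)
  fix x y :: cantor
  assume "\<forall>j\<in>J. x j = y j"
  then have "{j\<in>J. x j} = {j\<in>J. y j}" by auto
  then show "x \<in> coord_set J W \<longleftrightarrow> y \<in> coord_set J W" by (simp add: coord_set_def)
qed

lemma determined_by_imp_coord_set:
  assumes "determined_by J C"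
  shows "\<exists>W\<subseteq>Pow J. C = coord_set J W"
proof (intro exI conjI)
  let ?W = "{F. F \<subseteq> J \<and> (\<lambda>j. j \<in> F) \<in> C}"
  have "x \<in> C \<longleftrightarrow> (\<lambda>j. j \<in> {j\<in>J. x j}) \<in> C" for x
    using assms unfolding determined_by_def by (metis (mono_tags, lifting) mem_Collect_eq)
  then show "C = coord_set J ?W" unfolding coord_set_def by auto
qed auto

lemma open_coord_set:
  assumes "finite J"
  shows "open (coord_set J W)"
proof -
  have eq: "coord_set J W = (\<Union>x\<in>coord_set J W. {y. \<forall>j\<in>J. y (id j) \<in> {x j}})"
    using determined_by_coord_set[of J W] unfolding determined_by_def by auto
  show ?thesis
    by (subst eq, intro open_UN ballI product_topology_basis')
      (use assms in \<open>auto intro: discrete_topology_class.open_discrete\<close>)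
qed

lemma clopen_coord_set: "finite J \<Longrightarrow> clopen_set (coord_set J W)"
  using open_coord_set[of J W] open_coord_set[of J "- W"]
  unfolding clopen_set_def closed_def coord_set_def by (simp add: Compl_eq)

lemma compact_UNIV_cantor: "compact (UNIV :: cantor set)"
proof -
  have "compact_space (euclidean :: bool topology)"
    by (simp add: compact_space_def compactin_euclidean_iff finite_imp_compact)
  then have "compact_space (product_topology (\<lambda>i::nat. euclidean :: bool topology) UNIV)"
    using compact_space_product_topology by blast
  then show ?thesis
    by (simp add: euclidean_product_topology compact_space_def compactin_euclidean_iff)
qed

text \<open>Cover C by basic open sets inside it; compactness leaves finitely many, and C
  is determined by the union of their (finite) supports.\<close>
lemma clopen_determined_by_finite:
  assumes "clopen_set C"
  obtains J where "finite J" "determined_by J C"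
proof -
  have "\<exists>U. finite {i. U i \<noteq> UNIV} \<and> x \<in> Pi\<^sub>E UNIV U \<and> Pi\<^sub>E UNIV U \<subseteq> C" if "x \<in> C" for x
    using assms that unfolding clopen_set_def open_fun_def openin_product_topology_alt by force
  then obtain U where U: "\<And>x. x \<in> C \<Longrightarrow>
      finite {i. U x i \<noteq> UNIV} \<and> x \<in> Pi\<^sub>E UNIV (U x) \<and> Pi\<^sub>E UNIV (U x) \<subseteq> C"
    by metis
  have "compact C"
    using assms compact_UNIV_cantor unfolding clopen_set_def by (metis closed_Int_compact inf_top_right)
  moreover have "open (Pi\<^sub>E UNIV (U x))" if "x \<in> C" for x
    using U[OF that] by (simp add: open_PiE discrete_topology_class.open_discrete)
  moreover have "C \<subseteq> (\<Union>x\<in>C. Pi\<^sub>E UNIV (U x))" using U by blast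
  ultimately obtain X where X: "X \<subseteq> C" "finite X" "C \<subseteq> (\<Union>x\<in>X. Pi\<^sub>E UNIV (U x))"
    by (rule compactE_image)
  define J where "J = (\<Union>x\<in>X. {i. U x i \<noteq> UNIV})"
  have "C = (\<Union>x\<in>X. Pi\<^sub>E UNIV (U x))" using X U by blast
  moreover have "determined_by J (Pi\<^sub>E UNIV (U x))" if "x \<in> X" for x
    by (rule determined_by_mono[OF determined_by_PiE]) (use that in \<open>auto simp: J_def\<close>)
  ultimately have "determined_by J C" by (simp add: determined_by_UN)
  moreover have "finite J" unfolding J_def using X U by blast
  ultimately show thesis using that by blast
qed

lemma clopen_vimage:
  assumes "continuous_on UNIV f" "clopen_set (C :: cantor set)"
  shows "clopen_set (f -` C :: cantor set)"
  using assms continuous_on_open_vimage[of UNIV f] continuous_on_closed_vimage[of UNIV f]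
  unfolding clopen_set_def by simp

lemma cyl_eq_coord_set: "cyl i = coord_set {i} {{i}}"
  unfolding cyl_def coord_set_def by auto

lemma sets_mu: "sets (mu t) = sets borel"
proof -
  have "sets (mu t) = sets (Pi\<^sub>M UNIV (\<lambda>_. borel :: bool measure))"
    unfolding mu_def by (rule sets_PiM_cong) (simp_all add: sets_borel_eq_count_space)
  then show ?thesis by (simp add: sets_PiM_equal_borel)
qed

lemma space_mu: "space (mu t) = UNIV"
  unfolding mu_def by (simp add: space_PiM PiE_UNIV_domain)

lemma prob_space_mu: "prob_space (mu t)"
  unfolding mu_def by (rule prob_space_PiM) (simp add: prob_space_measure_pmf)

lemma measure_coord_set_singleton:
  assumes "finite J" "F \<subseteq> J" "0 \<le> t" "t \<le> 1"
  shows "measure (mu t) (coord_set J {F}) = t ^ card F * (1 - t) ^ (card J - card F)"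
proof -
  have emb: "coord_set J {F} =
      prod_emb UNIV (\<lambda>_. measure_pmf (bernoulli_pmf t)) J (\<Pi>\<^sub>E j\<in>J. {j \<in> F})"
    using assms(2) unfolding coord_set_def prod_emb_def
    by (auto simp: space_PiM PiE_def Pi_def restrict_def extensional_def)
  have "emeasure (mu t) (coord_set J {F}) = (\<Prod>j\<in>J. emeasure (measure_pmf (bernoulli_pmf t)) {j \<in> F})"
    unfolding emb mu_def
    by (rule emeasure_PiM_emb) (use assms in \<open>auto simp: prob_space_measure_pmf\<close>)
  also have "\<dots> = (\<Prod>j\<in>J. ennreal (if j \<in> F then t else 1 - t))"
    using assms by (intro prod.cong) (auto simp: emeasure_pmf_single)
  also have "\<dots> = ennreal (\<Prod>j\<in>J. if j \<in> F then t else 1 - t)"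
    using assms by (intro prod_ennreal) auto
  also have "(\<Prod>j\<in>J. if j \<in> F then t else 1 - t) = t ^ card F * (1 - t) ^ card (J - F)"
    using prod.subset_diff[OF assms(2,1), of "\<lambda>j. if j \<in> F then t else 1 - t"] by simp
  finally show ?thesis
    using assms by (simp add: measure_def card_Diff_subset finite_subset)
qed

lemma measure_coord_set_sum:
  assumes "finite J" "W \<subseteq> Pow J" "0 \<le> t" "t \<le> 1"
  shows "measure (mu t) (coord_set J W) = (\<Sum>F\<in>W. t ^ card F * (1 - t) ^ (card J - card F))"
proof -
  interpret prob_space "mu t" by (rule prob_space_mu)
  have "finite W" using assms(1,2) by (meson finite_Pow_iff finite_subset)
  have "coord_set J W = (\<Union>F\<in>W. coord_set J {F})" unfolding coord_set_def by auto
  moreover have "coord_set J {F} \<in> sets (mu t)" for F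
    using open_coord_set[OF assms(1)] by (simp add: sets_mu)
  ultimately have "measure (mu t) (coord_set J W) = (\<Sum>F\<in>W. measure (mu t) (coord_set J {F}))"
    using \<open>finite W\<close>
    by (auto intro!: finite_measure_finite_Union simp: disjoint_family_on_def coord_set_def)
  also have "\<dots> = (\<Sum>F\<in>W. t ^ card F * (1 - t) ^ (card J - card F))"
    using assms measure_coord_set_singleton by (intro sum.cong) auto
  finally show ?thesis .
qed

lemma measure_cyl: "0 \<le> t \<Longrightarrow> t \<le> 1 \<Longrightarrow> measure (mu t) (cyl i) = t"
  unfolding cyl_eq_coord_set by (simp add: measure_coord_set_sum)

section \<open>Bernstein expansions\<close>

lemma evalp_add: "evalp (p + q) x = evalp p x + evalp q x"
proof -
  have "map_poly real_of_int (p + q) = map_poly real_of_int p + map_poly real_of_int q"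
    by (intro poly_eqI) (simp add: coeff_map_poly)
  then show ?thesis unfolding evalp_def by simp
qed

lemma evalp_smult: "evalp (smult a p) x = of_int a * evalp p x"
  unfolding evalp_def by (simp add: map_poly_smult)

lemma evalp_pCons: "evalp (pCons a p) x = of_int a + x * evalp p x"
  unfolding evalp_def by (simp add: map_poly_pCons)

lemma evalp_0 [simp]: "evalp 0 x = 0"
  unfolding evalp_def by simp

lemma evalp_1 [simp]: "evalp 1 x = 1"
  unfolding evalp_def by simp

lemma evalp_mult: "evalp (p * q) x = evalp p x * evalp q x"
proof (induction p)
  case (pCons a p)
  have "pCons a p * q = smult a q + pCons 0 (p * q)" by (simp add: mult_pCons_left)
  then show ?case using pCons by (simp add: evalp_add evalp_smult evalp_pCons algebra_simps)
qed simp

lemma evalp_power: "evalp (p ^ n) x = evalp p x ^ n"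
  by (induction n) (simp_all add: evalp_mult)

lemma evalp_sum: "evalp (\<Sum>i\<in>A. f i) x = (\<Sum>i\<in>A. evalp (f i) x)"
  by (induction A rule: infinite_finite_induct) (simp_all add: evalp_add)

lemma evalp_bpoly: "evalp (bpoly n k) x = x ^ k * (1 - x) ^ (n - k)"
  unfolding bpoly_def by (simp add: evalp_mult evalp_power evalp_pCons)

abbreviation bernstein :: "nat \<Rightarrow> (nat \<Rightarrow> int) \<Rightarrow> int poly" where
  "bernstein n a \<equiv> \<Sum>k\<le>n. smult (a k) (bpoly n k)"

lemma evalp_bernstein:
  "evalp (bernstein n a) x = (\<Sum>k\<le>n. of_int (a k) * (x ^ k * (1 - x) ^ (n - k)))"
  by (simp add: evalp_sum evalp_smult evalp_bpoly)

lemma bpoly_mult: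
  assumes "k \<le> n" "j \<le> m"
  shows "bpoly n k * bpoly m j = bpoly (n + m) (k + j)"
proof -
  have "n + m - (k + j) = (n - k) + (m - j)" using assms by simp
  then show ?thesis unfolding bpoly_def by (simp add: power_add algebra_simps)
qed

lemma X_mult_bpoly: "k \<le> m \<Longrightarrow> [:0, 1:] * bpoly m k = bpoly (Suc m) (Suc k)"
  unfolding bpoly_def by (simp add: Suc_diff_le algebra_simps)

lemma poly_bpoly_0: "poly (bpoly n k) 0 = (if k = 0 then 1 else 0)"
  unfolding bpoly_def by simp

lemma bernstein_binomial: "bernstein m (\<lambda>k. int (m choose k)) = 1"
proof -
  have "([:0, 1:] + [:1, -1:] :: int poly) = 1" by (simp add: one_pCons)
  then have "(1 :: int poly) = ([:0, 1:] + [:1, -1:]) ^ m" by (metis power_one)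
  also have "\<dots> = (\<Sum>k\<le>m. of_nat (m choose k) * [:0, 1:] ^ k * [:1, -1:] ^ (m - k))"
    by (rule binomial_ring)
  finally show ?thesis by (simp add: bpoly_def of_nat_poly mult.assoc)
qed

lemma X_mult_bernstein:
  "[:0, 1:] * bernstein m v = (\<Sum>k\<le>m. smult (v k) (bpoly (Suc m) (Suc k)))"
  unfolding sum_distrib_left mult_smult_right by (intro sum.cong refl) (subst X_mult_bpoly, auto)

lemma bernstein_Suc:
  "bernstein (Suc n) c = smult (c 0) (bpoly (Suc n) 0) + [:0, 1:] * bernstein n (\<lambda>k. c (Suc k))"
  unfolding X_mult_bernstein by (rule sum.atMost_Suc_shift)

lemma X_mult_bernstein_shift:
  "[:0, 1:] * bernstein m v = bernstein (Suc m) (\<lambda>k. if k = 0 then 0 else v (k - 1))"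
  unfolding bernstein_Suc[where n=m] by simp

lemma bernstein_eq_0D: "bernstein n c = 0 \<Longrightarrow> k \<le> n \<Longrightarrow> c k = 0"
proof (induction n arbitrary: c k)
  case (Suc n)
  have "c 0 = poly (bernstein (Suc n) c) 0"
    unfolding bernstein_Suc by (simp add: poly_bpoly_0)
  then have "c 0 = 0" using Suc.prems(1) by (metis poly_0)
  then have "bernstein n (\<lambda>k. c (Suc k)) = 0"
    using Suc.prems(1)[unfolded bernstein_Suc] by simp
  then show ?case
    using Suc.IH[of "\<lambda>k. c (Suc k)"] Suc.prems(2) \<open>c 0 = 0\<close> by (cases k) auto
qed (simp add: bpoly_def)

lemma bernstein_inject: "bernstein n c = bernstein n d \<Longrightarrow> k \<le> n \<Longrightarrow> c k = d k"
  using bernstein_eq_0D[where c="\<lambda>k. c k - d k"]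
  by (simp add: smult_diff_left sum_subtractf)

definition family_poly :: "nat set \<Rightarrow> nat set set \<Rightarrow> int poly" where
  "family_poly J W = bernstein (card J) (\<lambda>k. int (card {F\<in>W. card F = k}))"

lemma evalp_family_poly:
  assumes "finite J" "W \<subseteq> Pow J"
  shows "evalp (family_poly J W) t = (\<Sum>F\<in>W. t ^ card F * (1 - t) ^ (card J - card F))"
proof -
  have "finite W" using assms by (meson finite_Pow_iff finite_subset)
  moreover have "card ` W \<subseteq> {..card J}" using assms by (auto intro: card_mono)
  ultimately have "(\<Sum>F\<in>W. t ^ card F * (1 - t) ^ (card J - card F)) =
      (\<Sum>k\<le>card J. \<Sum>F\<in>{F\<in>W. card F = k}. t ^ card F * (1 - t) ^ (card J - card F))"
    by (intro sum.group[symmetric]) auto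
  then show ?thesis by (simp add: family_poly_def evalp_bernstein)
qed

lemma partition_poly_family_poly:
  assumes "finite J" "W \<subseteq> Pow J"
  shows "partition_poly (family_poly J W)"
proof -
  have "card {F\<in>W. card F = k} \<le> card {F. F \<subseteq> J \<and> card F = k}" for k
    using assms by (intro card_mono) auto
  then show ?thesis
    unfolding partition_poly_def family_poly_def using n_subsets[OF assms(1)]
    by (intro exI[of _ "card J"] exI[of _ "\<lambda>k. int (card {F\<in>W. card F = k})"]) auto
qed

lemma family_poly_surj:
  assumes "finite J" "\<forall>k\<le>card J. 0 \<le> a k \<and> a k \<le> int (card J choose k)"
  shows "\<exists>W\<subseteq>Pow J. family_poly J W = bernstein (card J) a"
proof -
  have "\<exists>V. V \<subseteq> {F. F \<subseteq> J \<and> card F = k} \<and> (k \<le> card J \<longrightarrow> card V = nat (a k))" for k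
  proof (cases "k \<le> card J")
    case True
    then have "nat (a k) \<le> card {F. F \<subseteq> J \<and> card F = k}"
      using assms n_subsets[OF assms(1)] by fastforce
    then show ?thesis by (meson obtain_subset_with_card_n)
  qed auto
  then obtain V where V: "\<And>k. V k \<subseteq> {F. F \<subseteq> J \<and> card F = k}"
    "\<And>k. k \<le> card J \<Longrightarrow> card (V k) = nat (a k)"
    by metis
  define W where "W = (\<Union>k\<le>card J. V k)"
  have "{F\<in>W. card F = k} = V k" if "k \<le> card J" for k
    unfolding W_def using V(1) that by auto
  then have "family_poly J W = bernstein (card J) a"
    unfolding family_poly_def using V(2) assms(2) by (intro sum.cong) auto
  moreover have "W \<subseteq> Pow J" unfolding W_def using V(1) by blast
  ultimately show ?thesis by blast
qed

lemma family_poly_insert: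
  assumes "finite J" "i \<notin> J" "W \<subseteq> Pow J"
  shows "family_poly (insert i J) (insert i ` W) = [:0, 1:] * family_poly J W"
proof -
  have fin: "F \<in> W \<Longrightarrow> finite F \<and> i \<notin> F" for F
    using assms finite_subset by auto
  have "inj_on (insert i) W"
    by (rule inj_onI) (metis fin insert_ident)
  moreover have "{G\<in>insert i ` W. card G = Suc k} = insert i ` {F\<in>W. card F = k}" for k
    using fin by auto
  ultimately have "card {G\<in>insert i ` W. card G = Suc k} = card {F\<in>W. card F = k}" for k
    by (simp add: card_image inj_on_subset)
  moreover have "card {G\<in>insert i ` W. card G = 0} = 0"
    using fin by (auto simp: card_eq_0_iff)
  ultimately have "int (card {G\<in>insert i ` W. card G = k}) =
      (if k = 0 then 0 else int (card {F\<in>W. card F = k - 1}))" for k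
    by (cases k) simp_all
  then show ?thesis
    unfolding family_poly_def X_mult_bernstein_shift using assms by simp
qed

lemma measure_coord_set:
  assumes "finite J" "W \<subseteq> Pow J" "0 \<le> t" "t \<le> 1"
  shows "measure (mu t) (coord_set J W) = evalp (family_poly J W) t"
  using measure_coord_set_sum[OF assms] evalp_family_poly[OF assms(1,2)] by simp

lemma coord_set_subset_cyl_iff:
  assumes "W \<subseteq> Pow J" "i \<in> J"
  shows "coord_set J W \<subseteq> cyl i \<longleftrightarrow> (\<forall>F\<in>W. i \<in> F)"
proof
  assume sub: "coord_set J W \<subseteq> cyl i"
  show "\<forall>F\<in>W. i \<in> F"
  proof
    fix F assume "F \<in> W"
    moreover have "{j\<in>J. j \<in> F} = F" using \<open>F \<in> W\<close> assms(1) by auto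
    ultimately have "(\<lambda>j. j \<in> F) \<in> coord_set J W" by (simp add: coord_set_def)
    then show "i \<in> F" using sub by (auto simp: cyl_def)
  qed
qed (auto simp: coord_set_def cyl_def)

lemma clopen_measures:
  assumes "0 \<le> t" "t \<le> 1"
  shows "{measure (mu t) C | C. clopen_set C} = {evalp P t | P. partition_poly P}"
proof (intro set_eqI iffI)
  fix v assume "v \<in> {measure (mu t) C | C. clopen_set C}"
  then obtain C where C: "clopen_set C" "v = measure (mu t) C" by blast
  obtain J where J: "finite J" "determined_by J C"
    using clopen_determined_by_finite[OF C(1)] by blast
  then obtain W where W: "W \<subseteq> Pow J" "C = coord_set J W"
    using determined_by_imp_coord_set by blast
  then have "v = evalp (family_poly J W) t"
    using C(2) measure_coord_set[OF J(1) W(1) assms] by simp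
  then show "v \<in> {evalp P t | P. partition_poly P}"
    using partition_poly_family_poly[OF J(1) W(1)] by blast
next
  fix v assume "v \<in> {evalp P t | P. partition_poly P}"
  then obtain n a where a: "\<forall>k\<le>n. 0 \<le> a k \<and> a k \<le> int (n choose k)" "v = evalp (bernstein n a) t"
    unfolding partition_poly_def by blast
  obtain W where W: "W \<subseteq> Pow {..<n}" "family_poly {..<n} W = bernstein n a"
    using family_poly_surj[of "{..<n}" a] a(1) by auto
  have "v = measure (mu t) (coord_set {..<n} W)"
    using measure_coord_set[OF _ W(1) assms] W(2) a(2) by simp
  then show "v \<in> {measure (mu t) C | C. clopen_set C}"
    using clopen_coord_set[of "{..<n}" W] by auto
qed

lemma measure_clopen_subset_cyl:
  assumes "clopen_set D" "D \<subseteq> cyl i" "0 \<le> t" "t \<le> 1"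
  shows "\<exists>P. partition_poly P \<and> measure (mu t) D = t * evalp P t"
proof -
  obtain J0 where J0: "finite J0" "determined_by J0 D"
    using clopen_determined_by_finite[OF assms(1)] by blast
  define J where "J = J0 - {i}"
  have "determined_by (insert i J) D" by (rule determined_by_mono[OF J0(2)]) (auto simp: J_def)
  then obtain W where W: "W \<subseteq> Pow (insert i J)" "D = coord_set (insert i J) W"
    using determined_by_imp_coord_set by blast
  define W' where "W' = (\<lambda>F. F - {i}) ` W"
  have "\<forall>F\<in>W. i \<in> F" using coord_set_subset_cyl_iff[OF W(1)] W(2) assms(2) by blast
  then have "insert i ` W' = (\<lambda>F. F) ` W" unfolding W'_def image_image by (intro image_cong) auto
  then have "W = insert i ` W'" by simp
  moreover have "W' \<subseteq> Pow J" "finite J" "i \<notin> J"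
    using W(1) J0(1) unfolding W'_def J_def by auto
  ultimately have "measure (mu t) D = t * evalp (family_poly J W') t"
    using W measure_coord_set[of "insert i J" W t] assms(3,4)
    by (simp add: family_poly_insert evalp_pCons)
  then show ?thesis
    using partition_poly_family_poly[OF \<open>finite J\<close> \<open>W' \<subseteq> Pow J\<close>] by blast
qed

lemma ex_clopen_subset_cyl_measure:
  assumes "partition_poly P" "0 \<le> t" "t \<le> 1"
  shows "\<exists>D. clopen_set D \<and> D \<subseteq> cyl i \<and> measure (mu t) D = t * evalp P t"
proof -
  obtain n a where a: "\<forall>k\<le>n. 0 \<le> a k \<and> a k \<le> int (n choose k)" "P = bernstein n a"
    using assms(1) unfolding partition_poly_def by blast
  define J where "J = {Suc i..<Suc i + n}"
  have J: "finite J" "card J = n" "i \<notin> J" unfolding J_def by auto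
  obtain W where W: "W \<subseteq> Pow J" "family_poly J W = P"
    using family_poly_surj[of J a] a J by auto
  define D where "D = coord_set (insert i J) (insert i ` W)"
  have W_insert: "insert i ` W \<subseteq> Pow (insert i J)" using W(1) by auto
  then have "D \<subseteq> cyl i" unfolding D_def by (subst coord_set_subset_cyl_iff) auto
  moreover have "clopen_set D" unfolding D_def using J(1) by (simp add: clopen_coord_set)
  moreover have "measure (mu t) D = t * evalp P t"
    unfolding D_def using measure_coord_set[OF _ W_insert assms(2,3)] J W
    by (simp add: family_poly_insert evalp_pCons)
  ultimately show ?thesis by blast
qed

lemma clopen_subset_cyl_measures:
  assumes "0 \<le> t" "t \<le> 1"
  shows "{measure (mu t) D | D. clopen_set D \<and> D \<subseteq> cyl i} = {t * evalp P t | P. partition_poly P}"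
proof (intro set_eqI iffI)
  fix v assume "v \<in> {measure (mu t) D | D. clopen_set D \<and> D \<subseteq> cyl i}"
  then show "v \<in> {t * evalp P t | P. partition_poly P}"
    using measure_clopen_subset_cyl[OF _ _ assms] by blast
next
  fix v assume "v \<in> {t * evalp P t | P. partition_poly P}"
  then obtain P where P: "partition_poly P" "v = t * evalp P t" by blast
  then obtain D where "clopen_set D \<and> D \<subseteq> cyl i \<and> measure (mu t) D = v"
    using ex_clopen_subset_cyl_measure[OF P(1) assms] by metis
  then show "v \<in> {measure (mu t) D | D. clopen_set D \<and> D \<subseteq> cyl i}" by blast
qed

section \<open>Domination\<close>

definition bernstein_conv :: "nat \<Rightarrow> nat \<Rightarrow> (nat \<Rightarrow> int) \<Rightarrow> (nat \<Rightarrow> int) \<Rightarrow> nat \<Rightarrow> int" where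
  "bernstein_conv n m u v l = (\<Sum>p\<in>{p\<in>{..n}\<times>{..m}. fst p + snd p = l}. u (fst p) * v (snd p))"

lemma bernstein_mult:
  "bernstein n u * bernstein m v = bernstein (n + m) (bernstein_conv n m u v)"
proof -
  have "bernstein n u * bernstein m v =
      (\<Sum>k\<le>n. \<Sum>j\<le>m. smult (u k) (bpoly n k) * smult (v j) (bpoly m j))"
    by (rule sum_product)
  also have "\<dots> = (\<Sum>p\<in>{..n}\<times>{..m}. smult (u (fst p) * v (snd p)) (bpoly (n + m) (fst p + snd p)))"
    by (simp add: sum.cartesian_product case_prod_beta bpoly_mult mult_smult_left
        mult_smult_right ac_simps)
  also have "\<dots> = (\<Sum>l\<le>n + m. \<Sum>p\<in>{p\<in>{..n}\<times>{..m}. fst p + snd p = l}.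
      smult (u (fst p) * v (snd p)) (bpoly (n + m) (fst p + snd p)))"
    by (rule sum.group[symmetric]) auto
  also have "\<dots> = bernstein (n + m) (bernstein_conv n m u v)"
    unfolding bernstein_conv_def smult_sum by (intro sum.cong refl) auto
  finally show ?thesis .
qed

text \<open>Vandermonde's identity, read off from the product of two expansions of 1.\<close>
lemma bernstein_conv_binomial:
  assumes "l \<le> n + m"
  shows "bernstein_conv n m (\<lambda>k. int (n choose k)) (\<lambda>j. int (m choose j)) l = int ((n + m) choose l)"
proof (rule bernstein_inject[OF _ assms])
  show "bernstein (n + m) (bernstein_conv n m (\<lambda>k. int (n choose k)) (\<lambda>j. int (m choose j))) =
      bernstein (n + m) (\<lambda>l. int ((n + m) choose l))"
    unfolding bernstein_mult[symmetric] bernstein_binomial by simp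
qed

lemma bernstein_conv_mono:
  assumes "\<forall>k\<le>n. 0 \<le> u k \<and> u k \<le> u' k" "\<forall>j\<le>m. 0 \<le> v j \<and> v j \<le> v' j"
  shows "0 \<le> bernstein_conv n m u v l" "bernstein_conv n m u v l \<le> bernstein_conv n m u' v' l"
  unfolding bernstein_conv_def using assms
  by (auto intro!: sum_nonneg sum_mono mult_mono)

lemma dominates_imp_partition_poly:
  assumes "dominates Q R"
  shows "partition_poly R"
proof -
  obtain n a b where "\<forall>i\<le>n. 0 \<le> b i \<and> b i \<le> a i \<and> a i \<le> int (n choose i)" "R = bernstein n b"
    using assms unfolding dominates_def by blast
  then show ?thesis unfolding partition_poly_def
    by (intro exI[of _ n] exI[of _ b]) (auto intro: order.trans)
qed

lemma partition_poly_X: "partition_poly [:0, 1:]"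
proof -
  have "[:0, 1:] = bernstein 1 (\<lambda>k. int k)"
    by (simp add: bpoly_def)
  then show ?thesis
    unfolding partition_poly_def by (intro exI[of _ 1] exI[of _ "\<lambda>k. int k"]) (auto simp: le_Suc_eq)
qed

text \<open>Writing Q = Q * 1 with 1 expanded in the binomial basis of the same degree as P.\<close>
lemma dominates_mult:
  assumes "partition_poly Q" "partition_poly P"
  shows "dominates Q (Q * P)"
proof -
  obtain n a where a: "\<forall>k\<le>n. 0 \<le> a k \<and> a k \<le> int (n choose k)" "Q = bernstein n a"
    using assms(1) unfolding partition_poly_def by blast
  obtain m c where c: "\<forall>k\<le>m. 0 \<le> c k \<and> c k \<le> int (m choose k)" "P = bernstein m c"
    using assms(2) unfolding partition_poly_def by blast
  define A where "A = bernstein_conv n m a (\<lambda>j. int (m choose j))"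
  define B where "B = bernstein_conv n m a c"
  have "Q = bernstein (n + m) A"
    using bernstein_mult[where n=n and m=m and u=a and v="\<lambda>j. int (m choose j)"]
    unfolding A_def a(2) bernstein_binomial by simp
  moreover have "Q * P = bernstein (n + m) B"
    unfolding B_def a(2) c(2) by (rule bernstein_mult)
  moreover have "0 \<le> B l \<and> B l \<le> A l \<and> A l \<le> int ((n + m) choose l)" if "l \<le> n + m" for l
  proof -
    have "A l \<le> bernstein_conv n m (\<lambda>k. int (n choose k)) (\<lambda>j. int (m choose j)) l"
      unfolding A_def by (rule bernstein_conv_mono(2)) (use a in auto)
    then show ?thesis
      using bernstein_conv_binomial[OF that] a c
        bernstein_conv_mono[where u=a and u'=a and v=c and v'="\<lambda>j. int (m choose j)"]
      unfolding A_def B_def by auto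
  qed
  ultimately show ?thesis unfolding dominates_def by blast
qed

lemma bernstein_eq_X:
  assumes "[:0, 1:] = bernstein n a"
  obtains m where "n = Suc m" "\<And>k. k \<le> n \<Longrightarrow> a k = (if k = 0 then 0 else int (m choose (k - 1)))"
proof -
  obtain m where n: "n = Suc m"
  proof (cases n)
    case 0
    then have "poly [:0, 1:] (0 :: int) = poly [:0, 1:] 1" using assms by (simp add: bpoly_def)
    then show ?thesis by simp
  qed
  have "bernstein (Suc m) a = [:0, 1:] * bernstein m (\<lambda>j. int (m choose j))"
    unfolding bernstein_binomial using assms[symmetric] n by (simp only: mult_1_right)
  also have "\<dots> = bernstein (Suc m) (\<lambda>k. if k = 0 then 0 else int (m choose (k - 1)))"
    by (rule X_mult_bernstein_shift)
  finally have "a k = (if k = 0 then 0 else int (m choose (k - 1)))" if "k \<le> Suc m" for k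
    using that by (rule bernstein_inject)
  then show ?thesis using that n by blast
qed

lemma dominates_X_iff:
  "dominates [:0, 1:] P \<longleftrightarrow> (\<exists>P1. partition_poly P1 \<and> P = [:0, 1:] * P1)"
proof
  assume "dominates [:0, 1:] P"
  then obtain n a b where nab: "\<forall>k\<le>n. 0 \<le> b k \<and> b k \<le> a k \<and> a k \<le> int (n choose k)"
    "[:0, 1:] = bernstein n a" "P = bernstein n b"
    unfolding dominates_def by blast
  obtain m where n: "n = Suc m"
    and a: "\<And>k. k \<le> n \<Longrightarrow> a k = (if k = 0 then 0 else int (m choose (k - 1)))"
    using bernstein_eq_X[OF nab(2)] by blast
  define P1 where "P1 = bernstein m (\<lambda>k. b (Suc k))"
  have "partition_poly P1"
    unfolding partition_poly_def P1_def using nab(1) a n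
    by (intro exI[of _ m] exI[of _ "\<lambda>k. b (Suc k)"]) force
  moreover have "b 0 = 0" using a[of 0] nab(1) by force
  then have "bernstein (Suc m) b = bernstein (Suc m) (\<lambda>k. if k = 0 then 0 else b (Suc (k - 1)))"
    by (intro sum.cong) auto
  then have "P = [:0, 1:] * P1" unfolding P1_def X_mult_bernstein_shift nab(3) n .
  ultimately show "\<exists>P1. partition_poly P1 \<and> P = [:0, 1:] * P1" by blast
next
  assume "\<exists>P1. partition_poly P1 \<and> P = [:0, 1:] * P1"
  then show "dominates [:0, 1:] P" using dominates_mult partition_poly_X by blast
qed

lemma dominated_by_X_values:
  assumes "s \<noteq> 0"
  shows "{evalp P s / s | P. partition_poly P \<and> dominates [:0, 1:] P} = {evalp P s | P. partition_poly P}"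
proof -
  have "{P. partition_poly P \<and> dominates [:0, 1:] P} = (\<lambda>P. [:0, 1:] * P) ` {P. partition_poly P}"
    using dominates_X_iff dominates_imp_partition_poly by blast
  then show ?thesis using assms by (simp add: setcompr_eq_image image_image evalp_pCons)
qed

section \<open>Transport along the homeomorphism\<close>

lemma measure_vimage_distr:
  assumes "continuous_on UNIV h" "distr (mu r) (mu r) h = mu s" "D \<in> sets borel"
  shows "measure (mu r) (h -` D) = measure (mu s) D"
proof -
  have "h \<in> measurable (mu r) (mu r)"
    unfolding measurable_cong_sets[OF sets_mu sets_mu] by (rule borel_measurable_continuous_onI[OF assms(1)])
  moreover have "D \<in> sets (mu r)" using assms(3) by (simp add: sets_mu)
  ultimately show ?thesis
    using measure_distr assms(2) by (metis inf_top_right space_mu)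
qed

lemma clopen_subset_vimage_measures:
  assumes "homeomorphism UNIV UNIV h g" "distr (mu r) (mu r) h = mu s"
  shows "{measure (mu r) C | C. clopen_set C \<and> C \<subseteq> h -` A} =
    {measure (mu s) D | D. clopen_set D \<and> D \<subseteq> A}"
proof -
  have cont: "continuous_on UNIV h" "continuous_on UNIV g" and inv: "\<And>x. g (h x) = x" "\<And>y. h (g y) = y"
    using assms(1) unfolding homeomorphism_def by auto
  have measure_eq: "measure (mu r) (h -` D) = measure (mu s) D" if "clopen_set D" for D
    using measure_vimage_distr[OF cont(1) assms(2)] that by (simp add: clopen_set_def)
  show ?thesis
  proof (intro set_eqI iffI)
    fix v assume "v \<in> {measure (mu r) C | C. clopen_set C \<and> C \<subseteq> h -` A}"
    then obtain C where C: "clopen_set C" "C \<subseteq> h -` A" "v = measure (mu r) C" by blast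
    have "clopen_set (g -` C)" using clopen_vimage[OF cont(2) C(1)] .
    moreover have "g -` C \<subseteq> A" using C(2) by (auto simp: inv(2) subset_iff)
    moreover have "h -` (g -` C) = C" using inv(1) by auto
    then have "v = measure (mu s) (g -` C)" using C(3) measure_eq[OF \<open>clopen_set (g -` C)\<close>] by simp
    ultimately show "v \<in> {measure (mu s) D | D. clopen_set D \<and> D \<subseteq> A}" by blast
  next
    fix v assume "v \<in> {measure (mu s) D | D. clopen_set D \<and> D \<subseteq> A}"
    then obtain D where D: "clopen_set D" "D \<subseteq> A" "v = measure (mu s) D" by blast
    then have "clopen_set (h -` D)" "h -` D \<subseteq> h -` A" "v = measure (mu r) (h -` D)"
      using clopen_vimage[OF cont(1)] measure_eq by auto
    then show "v \<in> {measure (mu r) C | C. clopen_set C \<and> C \<subseteq> h -` A}" by blast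
  qed
qed

lemma measure_vimage_cyl:
  assumes "continuous_on UNIV h" "distr (mu r) (mu r) h = mu s" "0 \<le> s" "s \<le> 1"
  shows "measure (mu r) (h -` cyl i) = s"
  using measure_vimage_distr[OF assms(1,2)] measure_cyl[OF assms(3,4)] clopen_coord_set[of "{i}" "{{i}}"]
  by (simp add: cyl_eq_coord_set clopen_set_def)

lemma partition_poly_values_eq:
  assumes "homeomorphism UNIV UNIV h g" "distr (mu r) (mu r) h = mu s"
    "0 \<le> r" "r \<le> 1" "0 \<le> s" "s \<le> 1"
  shows "{evalp P s | P. partition_poly P} = {evalp P r | P. partition_poly P}"
  using clopen_subset_vimage_measures[OF assms(1,2), of UNIV] clopen_measures assms(3-6) by simp

theorem mainTheorem4:
  fixes r s :: real and h :: "cantor \<Rightarrow> cantor" and i :: nat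
  assumes "0 \<le> r" "r \<le> 1" "0 \<le> s" "s \<le> 1" "s \<noteq> 0"
    and "\<exists>g. homeomorphism UNIV UNIV h g"
    and "distr (mu r) (mu r) h = mu s"
  shows "{measure (mu r) C / measure (mu r) (h -` cyl i) | C. clopen_set C \<and> C \<subseteq> h -` cyl i}
           = {evalp P s / s | P. partition_poly P \<and> dominates [:0, 1:] P}
         \<and> {measure (mu r) C / measure (mu r) (h -` cyl i) | C. clopen_set C \<and> C \<subseteq> h -` cyl i}
           = {evalp P s | P. partition_poly P}
         \<and> (\<forall>Q C. partition_poly Q \<longrightarrow> measure (mu r) (h -` cyl i) = evalp Q r \<longrightarrow>
           clopen_set C \<longrightarrow> C \<subseteq> h -` cyl i \<longrightarrow>
           (\<exists>R. partition_poly R \<and> dominates Q R \<and> measure (mu r) C = evalp R r))"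
proof -
  obtain g where hg: "homeomorphism UNIV UNIV h g" using assms(6) by blast
  then have cyl: "measure (mu r) (h -` cyl i) = s"
    using measure_vimage_cyl[OF _ assms(7,3,4)] by (simp add: homeomorphism_def)
  have sections: "{measure (mu r) C | C. clopen_set C \<and> C \<subseteq> h -` cyl i} =
      {s * evalp P s | P. partition_poly P}"
    using clopen_subset_vimage_measures[OF hg assms(7)] clopen_subset_cyl_measures[OF assms(3,4)] by simp
  have dominated_values: "\<exists>R. partition_poly R \<and> dominates Q R \<and> measure (mu r) C = evalp R r"
    if Q: "partition_poly Q" "measure (mu r) (h -` cyl i) = evalp Q r"
      and C: "clopen_set C" "C \<subseteq> h -` cyl i" for Q C
  proof -
    obtain P1 where P1: "partition_poly P1" "measure (mu r) C = s * evalp P1 s"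
      using sections C by blast
    obtain P2 where P2: "partition_poly P2" "evalp P1 s = evalp P2 r"
      using partition_poly_values_eq[OF hg assms(7,1-4)] P1(1) by blast
    have "measure (mu r) C = evalp (Q * P2) r"
      using P1(2) P2(2) Q(2) cyl by (simp add: evalp_mult)
    then show ?thesis using dominates_mult[OF Q(1) P2(1)] dominates_imp_partition_poly by blast
  qed
  have ratios: "{measure (mu r) C / measure (mu r) (h -` cyl i) | C. clopen_set C \<and> C \<subseteq> h -` cyl i}
      = {evalp P s | P. partition_poly P}"
    unfolding cyl by (rule divide_setcompr_eq[OF sections assms(5)])
  show ?thesis
    unfolding ratios dominated_by_X_values[OF assms(5)] using dominated_values by blast
qed

end
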